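(* For an integer $p\ge 2$ let $S(p)=\sum_{k\geq 0}\frac{\left(k+1-\frac{p}{2}\left\lfloor\frac{k}{p}\right\rfloor\right)\left(\left\lfloor\frac{k}{p}\right\rfloor+1\right)}{(k+1)(k+p+1)(k+2)(k+p)}$. Then \[ S(3)=\frac{\pi}{18\sqrt{3}},\qquad S(4)=\frac{\pi}{48},\qquad S(6)=\frac{7\pi}{360\sqrt{3}}, \] \[ S(5)=\frac{\left(\sqrt{5}-1\right)\sqrt{5-\sqrt{5}}+3\left(\sqrt{5}+1\right)\sqrt{5+\sqrt{5}}}{600\sqrt{10}}\,\pi . \]
   Context: $\lfloor\cdot\rfloor$ denotes the floor function. *)

theory Defs
  imports "HOL-Analysis.Analysis"
begin

definition S_term :: "nat \<Rightarrow> nat \<Rightarrow> real" where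
  "S_term p k =
     ((real k + 1 - (real p / 2) * real_of_int \<lfloor>real k / real p\<rfloor>) *
      (real_of_int \<lfloor>real k / real p\<rfloor> + 1)) /
     ((real k + 1) * (real k + real p + 1) * (real k + 2) * (real k + real p))"

definition S :: "nat \<Rightarrow> real" where
  "S p = (\<Sum>k. S_term p k)"

end

theory Submission
  imports Defs
begin

text \<open>
  Write k = p q + r with 0 \<le> r < p. The k-th term is a rational function of k whose partial
  fraction decomposition has coefficients depending only on r: a multiple of
  1/(k+1) - 1/(k+p+1), which telescopes, and a multiple of 1/(k+2) - 1/(k+p). Summing the
  series in blocks of p consecutive terms, the latter contribute differences of digamma values
  at the points j/p. The weights r (p - 2 - r) are invariant under r \<mapsto> p - 2 - r, so these
  values pair up through the reflection formula \<psi>(1 - x) - \<psi>(x) = \<pi> cot (\<pi> x),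
  and all rational contributions cancel. For every p \<ge> 3 this gives

    S(p) = \<pi> / (p^2 (p - 1) (p - 2)) * (sum of (p - 2 r) cot (\<pi> r / p) over 0 < r < p/2),

  and the four values follow from the cotangent at \<pi>/3, \<pi>/4, \<pi>/5, 2\<pi>/5 and \<pi>/6.
\<close>

lemma Gamma_reflection_real:
  fixes x :: real
  assumes "x \<notin> \<int>"
  shows "Gamma x * Gamma (1 - x) = pi / sin (pi * x)"
proof -
  have "Gamma (complex_of_real x) * Gamma (1 - complex_of_real x) =
      of_real pi / sin (of_real pi * of_real x)"
    by (rule Gamma_reflection_complex)
  also have "Gamma (complex_of_real x) * Gamma (1 - complex_of_real x) =
      of_real (Gamma x * Gamma (1 - x))"
    by (simp flip: Gamma_complex_of_real)
  also have "of_real pi / sin (of_real pi * of_real x) = complex_of_real (pi / sin (pi * x))"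
    by (simp flip: sin_of_real)
  finally show ?thesis by (simp only: of_real_eq_iff)
qed

text \<open>Logarithmic differentiation of the reflection formula for \<Gamma>.\<close>

lemma Digamma_reflection_real:
  fixes x :: real
  assumes x: "0 < x" "x < 1"
  shows "Digamma (1 - x) = Digamma x + pi * cot (pi * x)"
proof -
  have not_int: "y \<notin> \<int>" if "0 < y" "y < 1" for y :: real
    using that by (auto elim!: Ints_cases)
  have not_nonpos_int: "y \<notin> \<int>\<^sub>\<le>\<^sub>0" if "0 < y" for y :: real
    using that by (auto elim!: nonpos_Ints_cases)
  have sin_pos: "sin (pi * x) > 0" using x by (intro sin_gt_zero) auto
  define D where "D = Gamma x * Gamma (1 - x) * (Digamma x - Digamma (1 - x))"
  have "((\<lambda>y. Gamma y * Gamma (1 - y)) has_field_derivative D) (at x)"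
    unfolding D_def using x not_nonpos_int
    by (auto intro!: derivative_eq_intros simp: algebra_simps)
  then have "((\<lambda>y. pi / sin (pi * y)) has_field_derivative D) (at x)"
    by (rule has_field_derivative_transform_within_open[where S = "{0<..<1}"])
       (use x not_int in \<open>auto simp: Gamma_reflection_real\<close>)
  moreover have "((\<lambda>y. pi / sin (pi * y)) has_field_derivative
      - pi * (cos (pi * x) * pi) / (sin (pi * x))\<^sup>2) (at x)"
    using sin_pos by (auto intro!: derivative_eq_intros simp: power2_eq_square)
  ultimately have "D = - pi * (cos (pi * x) * pi) / (sin (pi * x))\<^sup>2"
    by (rule DERIV_unique)
  moreover have "D = pi / sin (pi * x) * (Digamma x - Digamma (1 - x))"
    unfolding D_def Gamma_reflection_real[OF not_int[OF x]] ..
  ultimately have "pi / sin (pi * x) * (Digamma x - Digamma (1 - x)) =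
      pi / sin (pi * x) * (- pi * cos (pi * x) / sin (pi * x))"
    by (simp add: power2_eq_square)
  moreover have "pi / sin (pi * x) \<noteq> 0" using sin_pos by simp
  ultimately have "Digamma x - Digamma (1 - x) = - pi * cos (pi * x) / sin (pi * x)"
    by (metis mult_left_cancel)
  then show ?thesis by (simp add: cot_def field_simps)
qed

lemma cot_pi_minus: "cot (pi - x) = - cot x"
  by (simp add: cot_def)

lemma sums_inverse_diff_Digamma:
  fixes a b c :: real
  assumes "0 < c" "0 < a" "0 < b"
  shows "(\<lambda>n. 1 / (c * real n + a) - 1 / (c * real n + b)) sums
           ((Digamma (b / c) - Digamma (a / c)) / c)"
proof -
  have Digamma_sums: "(\<lambda>n. inverse (real (Suc n)) - inverse (x + real n)) sums
      (Digamma x + euler_mascheroni)" if "0 < x" for x :: real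
    using summable_Digamma[of x] that by (simp add: Digamma_def summable_sums)
  have "(\<lambda>n. inverse (a / c + real n) - inverse (b / c + real n)) sums
          (Digamma (b / c) - Digamma (a / c))"
    using sums_diff[OF Digamma_sums Digamma_sums, of "b / c" "a / c"] assms by simp
  moreover have "(inverse (a / c + real n) - inverse (b / c + real n)) / c =
      1 / (c * real n + a) - 1 / (c * real n + b)" for n
  proof -
    have "a / c + real n = (c * real n + a) / c" "b / c + real n = (c * real n + b) / c"
      using assms by (simp_all add: field_simps)
    then show ?thesis using assms by (simp add: diff_divide_distrib)
  qed
  ultimately show ?thesis
    using sums_divide[of _ _ c] by fastforce
qed

lemma sum_lessThan_of_nat_real: "(\<Sum>r<n. real r) = real n * (real n - 1) / 2"
  by (induction n) (simp_all add: field_simps)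

lemma sum_lessThan_pair_ends:
  fixes f :: "nat \<Rightarrow> 'a :: comm_monoid_add"
  assumes "f 0 = 0" "even p \<Longrightarrow> f (p div 2) = 0"
  shows "(\<Sum>r<p. f r) = (\<Sum>r = 1..(p - 1) div 2. f r + f (p - r))"
proof -
  define A where "A = {1..(p - 1) div 2}"
  define B where "B = (\<lambda>r. p - r) ` A"
  have "(\<Sum>r<p. f r) = (\<Sum>r \<in> A \<union> B. f r)"
  proof (rule sum.mono_neutral_right)
    show "A \<union> B \<subseteq> {..<p}" unfolding A_def B_def by auto
    show "\<forall>r \<in> {..<p} - (A \<union> B). f r = 0"
    proof
      fix r assume r: "r \<in> {..<p} - (A \<union> B)"
      have "\<not> p - (p - 1) div 2 \<le> r"
      proof
        assume "p - (p - 1) div 2 \<le> r"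
        with r have "p - r \<in> A" unfolding A_def by auto
        then have "r \<in> B" unfolding B_def using r by (auto intro!: image_eqI[where x = "p - r"])
        with r show False by blast
      qed
      moreover have "r \<notin> A" using r by blast
      ultimately have "r = 0 \<or> (even p \<and> r = p div 2)"
        using r unfolding A_def by auto presburger
      then show "f r = 0" using assms by auto
    qed
  qed simp
  also have "\<dots> = (\<Sum>r \<in> A. f r) + (\<Sum>r \<in> B. f r)"
    by (rule sum.union_disjoint) (auto simp: A_def B_def)
  also have "(\<Sum>r \<in> B. f r) = (\<Sum>r \<in> A. f (p - r))"
    unfolding B_def
    by (rule sum.reindex_cong[where l = "\<lambda>r. p - r"]) (auto simp: A_def inj_on_def)
  finally show ?thesis
    unfolding A_def by (simp add: sum.distrib)
qed

lemma S_term_eq_rational: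
  assumes "0 < p"
  shows "S_term p k = (real k + real (k mod p) + 2) * (real k - real (k mod p) + real p) /
     (2 * real p * ((real k + 1) * (real k + real p + 1) * (real k + 2) * (real k + real p)))"
proof -
  have "real k = real p * real (k div p) + real (k mod p)"
    by (metis div_mult_mod_eq mult.commute of_nat_add of_nat_mult)
  moreover have "\<lfloor>real k / real p\<rfloor> = int (k div p)"
    using floor_divide_of_nat_eq[of k p] by simp
  ultimately have "(real k + 1 - real p / 2 * real_of_int \<lfloor>real k / real p\<rfloor>) *
      (real_of_int \<lfloor>real k / real p\<rfloor> + 1)
    = (real k + real (k mod p) + 2) * (real k - real (k mod p) + real p) / (2 * real p)"
    using assms by (simp add: field_simps)
  then show ?thesis unfolding S_term_def by simp
qed

lemma S_term_bounds:
  assumes "0 < p"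
  shows "0 \<le> S_term p k" "S_term p k \<le> 1 / (real k + 1)\<^sup>2"
proof -
  define r where "r = real (k mod p)"
  have "k mod p + 1 \<le> p"
    using mod_less_divisor[OF assms, of k] by linarith
  then have r: "0 \<le> r" "r + 1 \<le> real p"
    unfolding r_def by linarith+
  define D where "D = (real k + 1) * (real k + real p + 1) * (real k + 2) * (real k + real p)"
  have D: "0 < D" unfolding D_def using assms by simp
  have S: "S_term p k = (real k + r + 2) * (real k - r + real p) / (2 * real p * D)"
    unfolding r_def D_def using S_term_eq_rational[OF assms] .
  show "0 \<le> S_term p k" unfolding S using r D by simp
  have "(real k + r + 2) * (real k - r + real p) \<le> (real k + real p + 1) * (real k + real p)"
    using r by (intro mult_mono) auto
  then have "S_term p k \<le> (real k + real p + 1) * (real k + real p) / (2 * real p * D)"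
    unfolding S using D assms by (intro divide_right_mono) auto
  also have "\<dots> = 1 / (2 * real p * (real k + 1) * (real k + 2))"
    unfolding D_def using assms
    by (simp add: divide_simps ac_simps add_pos_nonneg) (simp add: algebra_simps)
  also have "\<dots> \<le> 1 / (real k + 1)\<^sup>2"
  proof -
    have "real k + 2 \<le> real p * (real k + 2)"
      using assms by simp
    then have "real k + 1 \<le> 2 * (real p * (real k + 2))"
      by linarith
    then show ?thesis
      using assms by (intro divide_left_mono) (auto simp: power2_eq_square intro!: mult_mono)
  qed
  finally show "S_term p k \<le> 1 / (real k + 1)\<^sup>2" .
qed

lemma summable_S_term:
  assumes "0 < p"
  shows "summable (S_term p)"
proof (rule summable_comparison_test')
  show "summable (\<lambda>k. 1 / (real k + 1)\<^sup>2)"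
    using inverse_squares_sums by (simp add: sums_summable add.commute)
  show "norm (S_term p k) \<le> 1 / (real k + 1)\<^sup>2" for k
    using S_term_bounds[OF assms] by simp
qed

lemma sums_S_blocks:
  assumes "0 < p"
  shows "(\<lambda>q. \<Sum>r<p. S_term p (p * q + r)) sums S p"
proof -
  have "S_term p sums S p"
    unfolding S_def using summable_S_term[OF assms] by (simp add: summable_sums)
  from sums_group[OF this assms] show ?thesis
    by (simp add: sum.atLeastLessThan_shift_0 atLeast0LessThan comp_def mult.commute)
qed

definition S_tele_weight :: "nat \<Rightarrow> nat \<Rightarrow> real" where
  "S_tele_weight p r = (real r + 1) * (real p - 1 - real r)"

definition S_digamma_weight :: "nat \<Rightarrow> nat \<Rightarrow> real" where
  "S_digamma_weight p r = real r * (real p - 2 - real r)"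

lemma S_term_partial_fractions:
  assumes "2 < p"
  shows "S_term p k =
    S_tele_weight p (k mod p) / (2 * real p ^ 2 * (real p - 1))
      * (1 / (real k + 1) - 1 / (real k + real p + 1))
    - S_digamma_weight p (k mod p) / (2 * real p * (real p - 1) * (real p - 2))
      * (1 / (real k + 2) - 1 / (real k + real p))"
proof -
  have "(x + r + 2) * (x - r + a) / (2 * a * ((x + 1) * (x + a + 1) * (x + 2) * (x + a))) =
    (r + 1) * (a - 1 - r) / (2 * a ^ 2 * (a - 1)) * (1 / (x + 1) - 1 / (x + a + 1))
    - r * (a - 2 - r) / (2 * a * (a - 1) * (a - 2)) * (1 / (x + 2) - 1 / (x + a))"
    if "2 < a" "0 \<le> x" for x r a :: real
  proof -
    have "x + 1 \<noteq> 0" "x + 2 \<noteq> 0" "x + a \<noteq> 0" "x + a + 1 \<noteq> 0"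
      "a \<noteq> 0" "a - 1 \<noteq> 0" "a - 2 \<noteq> 0"
      using that by linarith+
    then show ?thesis by (simp add: divide_simps) algebra
  qed
  from this[of "real p" "real k" "real (k mod p)"] show ?thesis
    using S_term_eq_rational[of p k] assms
    unfolding S_tele_weight_def S_digamma_weight_def by simp
qed

lemma sums_S_term_residue_class:
  assumes "2 < p" "r < p"
  shows "(\<lambda>q. S_term p (p * q + r)) sums
    (S_tele_weight p r / (real r + 1) / (2 * real p ^ 2 * (real p - 1))
     - S_digamma_weight p r
         * (Digamma ((real r + real p) / real p) - Digamma ((real r + 2) / real p))
       / (2 * real p ^ 2 * (real p - 1) * (real p - 2)))"
proof -
  have p: "0 < real p" "real p - 1 \<noteq> 0" "real p - 2 \<noteq> 0" using assms by simp_all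
  define c where "c = S_tele_weight p r / (2 * real p ^ 2 * (real p - 1))"
  define d where "d = S_digamma_weight p r / (2 * real p * (real p - 1) * (real p - 2))"
  have "(real r + 1 + real p) / real p = (real r + 1) / real p + 1"
    using p by (simp add: field_simps)
  then have tele: "(Digamma ((real r + 1 + real p) / real p) - Digamma ((real r + 1) / real p))
      / real p = 1 / (real r + 1)"
    using p by (simp add: Digamma_plus1)
  have "S_term p (p * q + r) =
    c * (1 / (real p * real q + (real r + 1)) - 1 / (real p * real q + (real r + 1 + real p)))
    - d * (1 / (real p * real q + (real r + 2)) - 1 / (real p * real q + (real r + real p)))"
    for q
    using S_term_partial_fractions[OF assms(1), of "p * q + r"] assms(2)
    unfolding c_def d_def by (simp add: algebra_simps)
  moreover have "(\<lambda>q.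
      c * (1 / (real p * real q + (real r + 1)) - 1 / (real p * real q + (real r + 1 + real p)))
    - d * (1 / (real p * real q + (real r + 2)) - 1 / (real p * real q + (real r + real p)))) sums
    (c * (1 / (real r + 1))
     - d * ((Digamma ((real r + real p) / real p) - Digamma ((real r + 2) / real p)) / real p))"
    using sums_diff[OF
      sums_mult[OF sums_inverse_diff_Digamma[OF p(1), of "real r + 1" "real r + 1 + real p"], of c]
      sums_mult[OF sums_inverse_diff_Digamma[OF p(1), of "real r + 2" "real r + real p"], of d]]
      p(1)
    by (simp add: tele)
  moreover have "c * (1 / (real r + 1))
     - d * ((Digamma ((real r + real p) / real p) - Digamma ((real r + 2) / real p)) / real p)
    = S_tele_weight p r / (real r + 1) / (2 * real p ^ 2 * (real p - 1))
     - S_digamma_weight p r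
         * (Digamma ((real r + real p) / real p) - Digamma ((real r + 2) / real p))
       / (2 * real p ^ 2 * (real p - 1) * (real p - 2))"
    using p unfolding c_def d_def by (simp add: power2_eq_square field_simps)
  ultimately show ?thesis
    by simp
qed

lemma S_eq_Digamma_sum:
  assumes "2 < p"
  shows "S p = (\<Sum>r<p. S_tele_weight p r / (real r + 1)) / (2 * real p ^ 2 * (real p - 1))
    - (\<Sum>r<p. S_digamma_weight p r *
         (Digamma ((real r + real p) / real p) - Digamma ((real r + 2) / real p)))
      / (2 * real p ^ 2 * (real p - 1) * (real p - 2))"
proof -
  have "(\<lambda>q. \<Sum>r<p. S_term p (p * q + r)) sums (\<Sum>r<p.
    S_tele_weight p r / (real r + 1) / (2 * real p ^ 2 * (real p - 1))
     - S_digamma_weight p r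
         * (Digamma ((real r + real p) / real p) - Digamma ((real r + 2) / real p))
       / (2 * real p ^ 2 * (real p - 1) * (real p - 2)))"
    using sums_S_term_residue_class[OF assms] by (intro sums_sum) simp
  with sums_S_blocks[of p] assms show ?thesis
    by (simp add: sums_unique2 sum_subtractf sum_divide_distrib)
qed

lemma sum_S_tele_weight: "(\<Sum>r<p. S_tele_weight p r / (real r + 1)) = real p * (real p - 1) / 2"
proof -
  have "S_tele_weight p r / (real r + 1) = real p - 1 - real r" for r
    unfolding S_tele_weight_def by (simp add: add_pos_nonneg)
  then have "(\<Sum>r<p. S_tele_weight p r / (real r + 1)) = (\<Sum>r<p. real p - 1 - real r)"
    by simp
  also have "\<dots> = real p * (real p - 1) - real p * (real p - 1) / 2"
    by (simp only: sum_subtractf sum_lessThan_of_nat_real) (simp add: algebra_simps)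
  finally show ?thesis
    by simp
qed

lemma sum_S_digamma_weight_shift:
  assumes "0 < p"
  shows "(\<Sum>r<p. S_digamma_weight p r * Digamma ((real r + real p) / real p)) =
    (\<Sum>r<p. S_digamma_weight p r * Digamma (real r / real p))
    + real p * (real p - 1) * (real p - 4) / 2"
proof -
  have "S_digamma_weight p r * Digamma ((real r + real p) / real p) =
    S_digamma_weight p r * Digamma (real r / real p) + real p * (real p - 2 - real r)
      - (if r = 0 then real p * (real p - 2) else 0)" for r
  proof (cases "r = 0")
    case False
    have "(real r + real p) / real p = real r / real p + 1"
      using assms by (simp add: field_simps)
    then have "Digamma ((real r + real p) / real p) = Digamma (real r / real p) + real p / real r"
      using False assms by (simp add: Digamma_plus1)
    then show ?thesis
      using False by (simp add: S_digamma_weight_def field_simps)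
  qed (simp add: S_digamma_weight_def)
  then have "(\<Sum>r<p. S_digamma_weight p r * Digamma ((real r + real p) / real p)) =
    (\<Sum>r<p. S_digamma_weight p r * Digamma (real r / real p))
    + (\<Sum>r<p. real p * (real p - 2 - real r)) - real p * (real p - 2)"
    using assms by (simp add: sum.distrib sum_subtractf)
  also have "(\<Sum>r<p. real p * (real p - 2 - real r)) =
      real p * (real p * (real p - 2) - real p * (real p - 1) / 2)"
    by (simp only: sum_distrib_left [symmetric] sum_subtractf sum_lessThan_of_nat_real)
       (simp add: algebra_simps)
  finally show ?thesis
    by (simp add: field_simps)
qed

text \<open>The substitution r \<mapsto> p - 2 - r, which leaves the weight invariant.\<close>

lemma sum_S_digamma_weight_reflect:
  assumes "0 < p"
  shows "(\<Sum>r<p. S_digamma_weight p r * Digamma ((real r + 2) / real p)) =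
    (\<Sum>r<p - 1. S_digamma_weight p r * Digamma (1 - real r / real p))
    + S_digamma_weight p (p - 1) * Digamma (1 / real p + 1)"
proof -
  obtain n where n: "p = Suc n" using assms gr0_implies_Suc by blast
  have "(\<Sum>r<n. S_digamma_weight p r * Digamma ((real r + 2) / real p)) =
    (\<Sum>r<n. S_digamma_weight p (n - Suc r) * Digamma ((real (n - Suc r) + 2) / real p))"
    by (rule sum.nat_diff_reindex [symmetric])
  also have "\<dots> = (\<Sum>r<n. S_digamma_weight p r * Digamma (1 - real r / real p))"
  proof (rule sum.cong)
    fix r assume "r \<in> {..<n}"
    then have r: "real (n - Suc r) = real p - 2 - real r" using n by (simp add: of_nat_diff)
    have "(real p - 2 - real r + 2) / real p = 1 - real r / real p"
      using assms by (simp add: field_simps)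
    moreover have "S_digamma_weight p (n - Suc r) = S_digamma_weight p r"
      unfolding S_digamma_weight_def r by (simp add: algebra_simps)
    ultimately show "S_digamma_weight p (n - Suc r) * Digamma ((real (n - Suc r) + 2) / real p) =
      S_digamma_weight p r * Digamma (1 - real r / real p)"
      unfolding r by simp
  qed simp
  finally show ?thesis
    using assms by (simp add: n field_simps)
qed

lemma S_digamma_weight_Digamma_reflection:
  assumes "r < p"
  shows "S_digamma_weight p r * (Digamma (real r / real p) - Digamma (1 - real r / real p)) =
    - pi * (S_digamma_weight p r * cot (pi * real r / real p))"
proof (cases "r = 0")
  case False
  then have "0 < real r / real p" "real r / real p < 1" using assms by simp_all
  from Digamma_reflection_real[OF this] show ?thesis by simp
qed (simp add: S_digamma_weight_def)

lemma S_digamma_weight_last: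
  assumes "1 < p"
  shows "S_digamma_weight p (p - 1) * (Digamma (real (p - 1) / real p) - Digamma (1 / real p + 1)) =
    - pi * (S_digamma_weight p (p - 1) * cot (pi * real (p - 1) / real p)) + real p * (real p - 1)"
proof -
  have p: "real (p - 1) = real p - 1" using assms by (simp add: of_nat_diff)
  have "0 < 1 / real p" "1 / real p < 1" using assms by simp_all
  moreover have "(real p - 1) / real p = 1 - 1 / real p"
    using assms by (simp add: field_simps)
  ultimately have Digamma_last:
      "Digamma ((real p - 1) / real p) = Digamma (1 / real p) + pi * cot (pi / real p)"
    using Digamma_reflection_real by simp
  have Digamma_Suc: "Digamma (1 / real p + 1) = Digamma (1 / real p) + real p"
    using assms by (simp add: Digamma_plus1)
  have "pi * (real p - 1) / real p = pi - pi / real p"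
    using assms by (simp add: field_simps)
  then have cot_last: "cot (pi * (real p - 1) / real p) = - cot (pi / real p)"
    by (simp add: cot_pi_minus)
  have weight_last: "S_digamma_weight p (p - 1) = - (real p - 1)"
    unfolding S_digamma_weight_def p by simp
  show ?thesis
    unfolding p Digamma_last Digamma_Suc cot_last weight_last by (simp add: algebra_simps)
qed

lemma sum_S_digamma_weight_Digamma_diff:
  assumes "2 < p"
  shows "(\<Sum>r<p. S_digamma_weight p r *
      (Digamma ((real r + real p) / real p) - Digamma ((real r + 2) / real p))) =
    real p * (real p - 1) * (real p - 2) / 2
    - pi * (\<Sum>r<p. S_digamma_weight p r * cot (pi * real r / real p))"
proof -
  obtain n where n: "p = Suc n" using assms by (cases p) auto
  then have pn: "p - 1 = n" by simp
  have p: "0 < p" "1 < p" using assms by simp_all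
  have "(\<Sum>r<p. S_digamma_weight p r *
      (Digamma ((real r + real p) / real p) - Digamma ((real r + 2) / real p))) =
    (\<Sum>r<n. S_digamma_weight p r * (Digamma (real r / real p) - Digamma (1 - real r / real p)))
    + S_digamma_weight p n * (Digamma (real n / real p) - Digamma (1 / real p + 1))
    + real p * (real p - 1) * (real p - 4) / 2"
    using sum_S_digamma_weight_shift[OF p(1)] sum_S_digamma_weight_reflect[OF p(1)]
    by (simp add: right_diff_distrib sum_subtractf n)
  also have "\<dots> = - pi * (\<Sum>r<p. S_digamma_weight p r * cot (pi * real r / real p))
    + real p * (real p - 1) + real p * (real p - 1) * (real p - 4) / 2"
  proof -
    have "(\<Sum>r<n. S_digamma_weight p r *
        (Digamma (real r / real p) - Digamma (1 - real r / real p)))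
      = (\<Sum>r<n. - pi * (S_digamma_weight p r * cot (pi * real r / real p)))"
      by (intro sum.cong refl S_digamma_weight_Digamma_reflection) (use n in auto)
    also have "\<dots> = - pi * (\<Sum>r<n. S_digamma_weight p r * cot (pi * real r / real p))"
      by (simp add: sum_distrib_left)
    finally have reflected: "(\<Sum>r<n. S_digamma_weight p r *
        (Digamma (real r / real p) - Digamma (1 - real r / real p)))
      = - pi * (\<Sum>r<n. S_digamma_weight p r * cot (pi * real r / real p))" .
    have "(\<Sum>r<p. S_digamma_weight p r * cot (pi * real r / real p)) =
      (\<Sum>r<n. S_digamma_weight p r * cot (pi * real r / real p))
      + S_digamma_weight p n * cot (pi * real n / real p)"
      using n by simp
    with reflected show ?thesis
      using S_digamma_weight_last[OF p(2), unfolded pn] by (simp add: algebra_simps)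
  qed
  finally show ?thesis
    by (simp add: field_simps)
qed

lemma S_eq_cot_sum:
  assumes "2 < p"
  shows "S p = pi / (2 * real p ^ 2 * (real p - 1) * (real p - 2)) *
    (\<Sum>r<p. S_digamma_weight p r * cot (pi * real r / real p))"
proof -
  have "S p = real p * (real p - 1) / 2 / (2 * real p ^ 2 * (real p - 1))
    - (real p * (real p - 1) * (real p - 2) / 2
       - pi * (\<Sum>r<p. S_digamma_weight p r * cot (pi * real r / real p)))
      / (2 * real p ^ 2 * (real p - 1) * (real p - 2))"
    unfolding S_eq_Digamma_sum[OF assms] sum_S_tele_weight
      sum_S_digamma_weight_Digamma_diff[OF assms] ..
  also have "\<dots> = pi / (2 * real p ^ 2 * (real p - 1) * (real p - 2)) *
    (\<Sum>r<p. S_digamma_weight p r * cot (pi * real r / real p))"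
  proof -
    define a where "a = real p"
    have "a \<noteq> 0" "a - 1 \<noteq> 0" "a - 2 \<noteq> 0" using assms by (simp_all add: a_def)
    then have "a * (a - 1) / 2 / (2 * a ^ 2 * (a - 1)) = 1 / (4 * a)"
      "a * (a - 1) * (a - 2) / 2 / (2 * a ^ 2 * (a - 1) * (a - 2)) = 1 / (4 * a)"
      by (simp_all add: divide_simps power2_eq_square)
    then show ?thesis unfolding a_def [symmetric] by (simp add: diff_divide_distrib)
  qed
  finally show ?thesis .
qed

lemma S_eq_cot_half_sum:
  assumes "2 < p"
  shows "S p = pi / (real p ^ 2 * (real p - 1) * (real p - 2)) *
    (\<Sum>r = 1..(p - 1) div 2. (real p - 2 * real r) * cot (pi * real r / real p))"
proof -
  define f where "f r = S_digamma_weight p r * cot (pi * real r / real p)" for r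
  have "f 0 = 0" by (simp add: f_def S_digamma_weight_def)
  moreover have "f (p div 2) = 0" if "even p"
  proof -
    have half: "pi * real (p div 2) / real p = pi / 2"
      using that assms by (auto simp: real_of_nat_div field_simps)
    show ?thesis unfolding f_def half by (simp add: cot_def)
  qed
  ultimately have "(\<Sum>r<p. f r) = (\<Sum>r = 1..(p - 1) div 2. f r + f (p - r))"
    by (rule sum_lessThan_pair_ends)
  also have "\<dots> =
      (\<Sum>r = 1..(p - 1) div 2. 2 * ((real p - 2 * real r) * cot (pi * real r / real p)))"
  proof (rule sum.cong)
    fix r assume "r \<in> {1..(p - 1) div 2}"
    then have "r \<le> p" by auto
    then have r: "real (p - r) = real p - real r" by (simp add: of_nat_diff)
    have "pi * real (p - r) / real p = pi - pi * real r / real p"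
      unfolding r using assms by (simp add: field_simps)
    then have cot_eq: "cot (pi * real (p - r) / real p) = - cot (pi * real r / real p)"
      by (simp add: cot_pi_minus)
    show "f r + f (p - r) = 2 * ((real p - 2 * real r) * cot (pi * real r / real p))"
      unfolding f_def cot_eq by (simp add: S_digamma_weight_def r algebra_simps)
  qed simp
  finally have "(\<Sum>r<p. f r) =
    2 * (\<Sum>r = 1..(p - 1) div 2. (real p - 2 * real r) * cot (pi * real r / real p))"
    by (simp add: sum_distrib_left)
  then show ?thesis
    unfolding S_eq_cot_sum[OF assms] f_def by simp
qed

lemma cos_36: "cos (pi / 5) = (1 + sqrt 5) / 4"
proof -
  define c where "c = cos (pi / 5)"
  have "3 * (pi / 5) = pi - 2 * (pi / 5)" by simp
  then have "cos (3 * (pi / 5)) = - cos (2 * (pi / 5))" by (simp only: cos_pi_minus)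
  then have "4 * c ^ 3 - 3 * c = - (2 * c\<^sup>2 - 1)"
    unfolding c_def cos_treble_cos cos_double_cos .
  then have "(c + 1) * (4 * c\<^sup>2 - 2 * c - 1) = 0"
    by (simp add: algebra_simps power2_eq_square power3_eq_cube)
  moreover have "cos (pi / 3) < cos (pi / 5)" by (rule cos_monotone_0_pi) auto
  then have c: "c > 1 / 2" unfolding c_def cos_60 .
  ultimately have "4 * c\<^sup>2 - 2 * c - 1 = 0" by simp
  then have "(4 * c - 1)\<^sup>2 = 5" by (simp add: algebra_simps power2_eq_square)
  then have "sqrt 5 = 4 * c - 1" using c by (intro real_sqrt_unique) auto
  then show ?thesis unfolding c_def by simp
qed

lemma cos_72: "cos (2 * pi / 5) = (sqrt 5 - 1) / 4"
proof -
  have "cos (2 * pi / 5) = 2 * cos (pi / 5) ^ 2 - 1"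
    using cos_double_cos[of "pi / 5"] by simp
  then show ?thesis unfolding cos_36 by (simp add: power2_eq_square field_simps)
qed

lemma sin_36: "sin (pi / 5) = sqrt (10 - 2 * sqrt 5) / 4"
proof -
  have "sin (pi / 5) > 0" by (rule sin_gt_zero) auto
  moreover have "(4 * sin (pi / 5))\<^sup>2 = 10 - 2 * sqrt 5"
    unfolding power_mult_distrib sin_squared_eq cos_36 by (simp add: power2_eq_square field_simps)
  ultimately have "sqrt (10 - 2 * sqrt 5) = 4 * sin (pi / 5)" by (intro real_sqrt_unique) auto
  then show ?thesis by simp
qed

lemma sin_72: "sin (2 * pi / 5) = sqrt (10 + 2 * sqrt 5) / 4"
proof -
  have "sin (2 * pi / 5) > 0" by (rule sin_gt_zero) auto
  moreover have "(4 * sin (2 * pi / 5))\<^sup>2 = 10 + 2 * sqrt 5"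
    unfolding power_mult_distrib sin_squared_eq cos_72 by (simp add: power2_eq_square field_simps)
  ultimately have "sqrt (10 + 2 * sqrt 5) = 4 * sin (2 * pi / 5)" by (intro real_sqrt_unique) auto
  then show ?thesis by simp
qed

lemma S_3: "S 3 = pi / (18 * sqrt 3)"
  using S_eq_cot_half_sum[of 3] by (simp add: cot_def cos_60 sin_60 field_simps)

lemma S_4: "S 4 = pi / 48"
  using S_eq_cot_half_sum[of 4] by (simp add: cot_def cos_45 sin_45 field_simps)

lemma S_6: "S 6 = 7 * pi / (360 * sqrt 3)"
proof -
  have "S 6 = pi / 720 * (4 * cot (pi / 6) + 2 * cot (pi / 3))"
    using S_eq_cot_half_sum[of 6] by (simp add: sum.atLeast_Suc_atMost field_simps)
  moreover have "sqrt 3 * (sqrt 3 * x) = 3 * x" for x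
    by (simp add: mult.assoc [symmetric])
  ultimately show ?thesis by (simp add: cot_def cos_30 sin_30 cos_60 sin_60 field_simps)
qed

lemma S_5:
  "S 5 = ((sqrt 5 - 1) * sqrt (5 - sqrt 5) + 3 * (sqrt 5 + 1) * sqrt (5 + sqrt 5))
         / (600 * sqrt 10) * pi"
proof -
  define s where "s = sqrt (5::real)"
  define u where "u = sqrt (5 - s)"
  define v where "v = sqrt (5 + s)"
  have s: "s * s = 5" "0 < s" "s < 5" unfolding s_def by (simp_all add: real_less_lsqrt)
  have uv: "0 < u" "0 < v" unfolding u_def v_def using s by simp_all
  have "u * v = sqrt ((5 - s) * (5 + s))" unfolding u_def v_def by (simp add: real_sqrt_mult)
  also have "(5 - s) * (5 + s) = 4 * 5" using s by (simp add: algebra_simps)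
  also have "sqrt (4 * 5) = 2 * s" unfolding s_def by (subst real_sqrt_mult) simp
  finally have "u * v = 2 * s" .
  then have inv: "1 / u = v / (2 * s)" "1 / v = u / (2 * s)"
    using uv s by (simp_all add: field_simps)
  have "sqrt (10 - 2 * s) = sqrt 2 * u" "sqrt (10 + 2 * s) = sqrt 2 * v" "sqrt 10 = sqrt 2 * s"
    unfolding u_def v_def s_def by (simp_all add: real_sqrt_mult [symmetric] algebra_simps)
  then have cot: "cot (pi / 5) = (1 + s) / (sqrt 2 * u)" "cot (2 * pi / 5) = (s - 1) / (sqrt 2 * v)"
    and sqrt_10: "sqrt 10 = sqrt 2 * s"
    unfolding cot_def cos_36 sin_36 cos_72 sin_72 s_def [symmetric] using uv
    by (simp_all add: field_simps)
  have "S 5 = pi / 300 * (3 * cot (pi / 5) + cot (2 * pi / 5))"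
    using S_eq_cot_half_sum[of 5] by (simp add: sum.atLeast_Suc_atMost field_simps)
  also have "\<dots> = pi / (300 * sqrt 2) * (3 * (1 + s) * (1 / u) + (s - 1) * (1 / v))"
  proof -
    have sqrt_2: "sqrt 2 * (sqrt 2 * x) = 2 * x" for x
      by (simp add: mult.assoc [symmetric])
    show ?thesis unfolding cot using uv by (simp add: field_simps sqrt_2)
  qed
  also have "\<dots> = ((s - 1) * u + 3 * (s + 1) * v) / (600 * sqrt 10) * pi"
    unfolding inv sqrt_10 using s by (simp add: field_simps)
  finally show ?thesis unfolding s_def u_def v_def .
qed

theorem mainTheorem9:
  shows "S 3 = pi / (18 * sqrt 3) \<and>
         S 4 = pi / 48 \<and>
         S 6 = 7 * pi / (360 * sqrt 3) \<and>
         S 5 = ((sqrt 5 - 1) * sqrt (5 - sqrt 5) + 3 * (sqrt 5 + 1) * sqrt (5 + sqrt 5))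
               / (600 * sqrt 10) * pi"
  using S_3 S_4 S_6 S_5 by blast

end
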